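(* Let $\mathbb{T}=\mathbb{R}/\mathbb{Z}$. There exists a constant $C>0$, independent of the meshes and of $g$, such that $$\|\mathcal{I}_hg\|_{H^2_{h,\Delta t}(\mathbb{T})}\le(1+C\Delta t)\|g\|_{H^2_{h,\Delta t}(\mathbb{T})}\quad\text{for all }g\in H^2(\mathbb{T}).$$ Furthermore, if there is a constant $C_2>0$ with $\Delta t\le C_2\Delta t'$, then there exists a constant $C>0$ such that $\|\mathcal{I}_hg\|_{H^2_{h,\Delta t}(\mathbb{T})}\le(1+C\Delta t_n)\|g\|_{H^2_{h,\Delta t}(\mathbb{T})}$ for all $g\in H^2(\mathbb{T})$ and all $n$.
   Context: Temporal mesh $0=t^0<\dots<t^N=T$, $\Delta t_n=t^{n+1}-t^n$, $\Delta t=\max_n\Delta t_n<1$, $\Delta t'=\min_n\Delta t_n$. Spatial mesh $0=x_0<\dots<x_M=1$, $h=\max_j(x_{j+1}-x_j)$. $V_h$: $C^1(\mathbb{T})$ functions, cubic on each $[x_j,x_{j+1}]$. $\mathcal{I}_h:C^1(\mathbb{T})\to V_h$: $(\mathcal{I}_hg)(x_j)=g(x_j)$, $(\mathcal{I}_hg)'(x_j)=g'(x_j)$, $j=0,\dots,M-1$. $\|g\|_{H^2_{h,\Delta t}(\mathbb{T})}=\big(\|g\|_{L^2(\mathbb{T})}^2+\tfrac{h^4}{\Delta t}\|g''\|_{L^2(\mathbb{T})}^2\big)^{1/2}$. *)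

theory Defs
  imports "HOL-Analysis.Analysis"
begin

text \<open>Functions on the torus T = R/Z are represented as 1-periodic functions on the reals.\<close>

definition time_mesh :: "nat \<Rightarrow> (nat \<Rightarrow> real) \<Rightarrow> real \<Rightarrow> bool" where
  "time_mesh N t T \<longleftrightarrow> N \<ge> 1 \<and> t 0 = 0 \<and> t N = T \<and> (\<forall>n<N. t n < t (Suc n))"

definition dt_max :: "nat \<Rightarrow> (nat \<Rightarrow> real) \<Rightarrow> real" where
  "dt_max N t = Max {t (Suc n) - t n | n. n < N}"

definition dt_min :: "nat \<Rightarrow> (nat \<Rightarrow> real) \<Rightarrow> real" where
  "dt_min N t = Min {t (Suc n) - t n | n. n < N}"

definition space_mesh :: "nat \<Rightarrow> (nat \<Rightarrow> real) \<Rightarrow> bool" where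
  "space_mesh M x \<longleftrightarrow> M \<ge> 1 \<and> x 0 = 0 \<and> x M = 1 \<and> (\<forall>j<M. x j < x (Suc j))"

definition mesh_h :: "nat \<Rightarrow> (nat \<Rightarrow> real) \<Rightarrow> real" where
  "mesh_h M x = Max {x (Suc j) - x j | j. j < M}"

definition Vh :: "nat \<Rightarrow> (nat \<Rightarrow> real) \<Rightarrow> (real \<Rightarrow> real) set" where
  "Vh M x = {v. (\<forall>y. v (y + 1) = v y)
     \<and> (\<exists>v'. continuous_on UNIV v' \<and> (\<forall>y. (v has_real_derivative v' y) (at y)))
     \<and> (\<forall>j<M. \<exists>a b c d. \<forall>y\<in>{x j..x (Suc j)}. v y = a + b * y + c * y ^ 2 + d * y ^ 3)}"

definition interp :: "nat \<Rightarrow> (nat \<Rightarrow> real) \<Rightarrow> (real \<Rightarrow> real) \<Rightarrow> (real \<Rightarrow> real)" where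
  "interp M x g = (THE v. v \<in> Vh M x \<and>
      (\<forall>j<M. v (x j) = g (x j) \<and> deriv v (x j) = deriv g (x j)))"

text \<open>g in H^2(T), with first derivative g1 and (weak) second derivative g2:
  g is 1-periodic and differentiable with derivative g1, g1 is absolutely continuous
  with derivative g2 (g1 b - g1 a = int_a^b g2), and g2 is locally square integrable.\<close>
definition H2_per :: "(real \<Rightarrow> real) \<Rightarrow> (real \<Rightarrow> real) \<Rightarrow> (real \<Rightarrow> real) \<Rightarrow> bool" where
  "H2_per g g1 g2 \<longleftrightarrow> (\<forall>y. g (y + 1) = g y)
     \<and> (\<forall>y. (g has_real_derivative g1 y) (at y))
     \<and> (\<forall>a b. g2 integrable_on {a..b} \<and> (\<lambda>y. (g2 y) ^ 2) integrable_on {a..b})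
     \<and> (\<forall>a b. a \<le> b \<longrightarrow> g1 b - g1 a = integral {a..b} g2)"

definition H2hdt_norm :: "real \<Rightarrow> real \<Rightarrow> (real \<Rightarrow> real) \<Rightarrow> (real \<Rightarrow> real) \<Rightarrow> real" where
  "H2hdt_norm h dt f f2 = sqrt (integral {0..1} (\<lambda>y. (f y) ^ 2)
       + h ^ 4 / dt * integral {0..1} (\<lambda>y. (f2 y) ^ 2))"

end

theory Submission
  imports Defs
begin

(* On a mesh cell [a, b] let p be the cubic Hermite interpolant of g.  The error e = g - p and
   its derivative vanish at a and b, so e'' is L^2-orthogonal to affine functions, in particular
   to p''; hence ||g''||^2 = ||p''||^2 + ||e''||^2.  Since e(a) = e'(a) = 0, Cauchy-Schwarz and the
   mean value theorem give ||e||^2 <= (b - a)^4 ||e''||^2.  Summing over the cells,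
   ||g - I_h g||^2 <= h^4 (||g''||^2 - ||(I_h g)''||^2).  Young's inequality
   ||I_h g||^2 <= (1 + dt) ||g||^2 + (1 + 1/dt) ||g - I_h g||^2 then lets the term
   (h^4/dt) ||(I_h g)''||^2 be absorbed, which yields the first bound with C = 1; the second
   follows from dt <= C2 dt' <= C2 dt_n. *)

section \<open>Cubic Hermite interpolation on an interval\<close>

type_synonym hermite_form = "real \<Rightarrow> real \<Rightarrow> real \<Rightarrow> real \<Rightarrow> real \<Rightarrow> real \<Rightarrow> real \<Rightarrow> real"

(* Coefficients of (y - a)^2 and (y - a)^3 in the cubic with values A, B and slopes A', B'
   at a and b. *)
definition hermite_c2 :: "real \<Rightarrow> real \<Rightarrow> real \<Rightarrow> real \<Rightarrow> real \<Rightarrow> real \<Rightarrow> real" where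
  "hermite_c2 a b A A' B B' = (3 * (B - A - A' * (b - a)) - (B' - A') * (b - a)) / (b - a)^2"

definition hermite_c3 :: "real \<Rightarrow> real \<Rightarrow> real \<Rightarrow> real \<Rightarrow> real \<Rightarrow> real \<Rightarrow> real" where
  "hermite_c3 a b A A' B B' = ((B' - A') * (b - a) - 2 * (B - A - A' * (b - a))) / (b - a)^3"

definition hermite :: hermite_form where
  "hermite a b A A' B B' y =
     A + A' * (y - a) + hermite_c2 a b A A' B B' * (y - a)^2 + hermite_c3 a b A A' B B' * (y - a)^3"

definition hermite' :: hermite_form where
  "hermite' a b A A' B B' y =
     A' + 2 * hermite_c2 a b A A' B B' * (y - a) + 3 * hermite_c3 a b A A' B B' * (y - a)^2"

definition hermite'' :: hermite_form where
  "hermite'' a b A A' B B' y = 2 * hermite_c2 a b A A' B B' + 6 * hermite_c3 a b A A' B B' * (y - a)"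

lemma hermite_has_real_derivative:
  "(hermite a b A A' B B' has_real_derivative hermite' a b A A' B B' y) (at y)"
  unfolding hermite_def hermite'_def
  by (auto intro!: derivative_eq_intros simp: power2_eq_square power3_eq_cube algebra_simps)

lemma hermite'_has_real_derivative:
  "(hermite' a b A A' B B' has_real_derivative hermite'' a b A A' B B' y) (at y)"
  unfolding hermite'_def hermite''_def
  by (auto intro!: derivative_eq_intros simp: power2_eq_square algebra_simps)

lemma hermite_endpoints:
  assumes "a \<noteq> b"
  shows "hermite a b A A' B B' a = A" "hermite' a b A A' B B' a = A'"
    and "hermite a b A A' B B' b = B" "hermite' a b A A' B B' b = B'"
proof -
  define t D E where "t = b - a" and "D = B - A - A' * t" and "E = B' - A'"
  have t: "t \<noteq> 0" using assms by (simp add: t_def)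
  have c2: "hermite_c2 a b A A' B B' = (3 * D - E * t) / t^2"
    and c3: "hermite_c3 a b A A' B B' = (E * t - 2 * D) / t^3"
    by (simp_all add: hermite_c2_def hermite_c3_def t_def D_def E_def)
  show "hermite a b A A' B B' a = A" "hermite' a b A A' B B' a = A'"
    by (simp_all add: hermite_def hermite'_def)
  show "hermite a b A A' B B' b = B" "hermite' a b A A' B B' b = B'"
    unfolding hermite_def hermite'_def c2 c3 t_def[symmetric] using t
    by (simp_all add: D_def E_def field_simps power2_eq_square power3_eq_cube)
qed

lemma hermite_shift:
  "hermite (a + c) (b + c) A A' B B' (y + c) = hermite a b A A' B B' y"
  by (simp add: hermite_def hermite_c2_def hermite_c3_def)

lemma hermite_is_cubic: "\<exists>c0 c1 c2 c3. \<forall>y. hermite a b A A' B B' y = c0 + c1 * y + c2 * y^2 + c3 * y^3"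
proof -
  define d2 d3 where "d2 = hermite_c2 a b A A' B B'" and "d3 = hermite_c3 a b A A' B B'"
  have "hermite a b A A' B B' y = (A - A' * a + d2 * a^2 - d3 * a^3) + (A' - 2 * d2 * a + 3 * d3 * a^2) * y
      + (d2 - 3 * d3 * a) * y^2 + d3 * y^3" for y
    by (simp add: hermite_def d2_def[symmetric] d3_def[symmetric] power2_eq_square power3_eq_cube
        algebra_simps)
  then show ?thesis by blast
qed

lemma cubic_eq_hermite:
  fixes c0 c1 c2 c3 :: real
  assumes "a \<noteq> b"
    and "c0 + c1 * a + c2 * a^2 + c3 * a^3 = A" and "c1 + 2 * c2 * a + 3 * c3 * a^2 = A'"
    and "c0 + c1 * b + c2 * b^2 + c3 * b^3 = B" and "c1 + 2 * c2 * b + 3 * c3 * b^2 = B'"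
  shows "c0 + c1 * y + c2 * y^2 + c3 * y^3 = hermite a b A A' B B' y"
proof -
  define t where "t = b - a"
  have t: "t \<noteq> 0" using assms(1) by (simp add: t_def)
  define d2 d3 where "d2 = c2 + 3 * c3 * a" and "d3 = c3"
  have taylor: "c0 + c1 * z + c2 * z^2 + c3 * z^3
      = A + A' * (z - a) + d2 * (z - a)^2 + d3 * (z - a)^3" for z
    unfolding assms(2,3)[symmetric] d2_def d3_def
    by (simp add: power2_eq_square power3_eq_cube algebra_simps)
  have taylor': "c1 + 2 * c2 * z + 3 * c3 * z^2 = A' + 2 * d2 * (z - a) + 3 * d3 * (z - a)^2" for z
    unfolding assms(3)[symmetric] d2_def d3_def
    by (simp add: power2_eq_square algebra_simps)
  have B: "B = A + A' * t + d2 * t^2 + d3 * t^3" and B': "B' = A' + 2 * d2 * t + 3 * d3 * t^2"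
    using taylor[of b] taylor'[of b] assms(4,5) by (simp_all add: t_def)
  have "hermite_c2 a b A A' B B' = d2" "hermite_c3 a b A A' B B' = d3"
    unfolding hermite_c2_def hermite_c3_def t_def[symmetric] B B' using t
    by (simp_all add: field_simps power2_eq_square power3_eq_cube)
  then show ?thesis unfolding taylor hermite_def by simp
qed

lemma cubic_on_interval_eq_hermite:
  fixes w w' :: "real \<Rightarrow> real"
  assumes ab: "a < b"
    and w: "\<And>z. z \<in> {a..b} \<Longrightarrow> w z = c0 + c1 * z + c2 * z^2 + c3 * z^3"
    and w': "\<And>z. (w has_real_derivative w' z) (at z)"
    and y: "y \<in> {a..b}"
  shows "w y = hermite a b (w a) (w' a) (w b) (w' b) y"
proof -
  have w'_eq: "w' z = c1 + 2 * c2 * z + 3 * c3 * z^2" if z: "z \<in> {a..b}" for z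
  proof -
    have "((\<lambda>z. c0 + c1 * z + c2 * z^2 + c3 * z^3) has_real_derivative c1 + 2 * c2 * z + 3 * c3 * z^2)
        (at z within {a..b})"
      by (auto intro!: derivative_eq_intros simp: power2_eq_square)
    then have "(w has_real_derivative c1 + 2 * c2 * z + 3 * c3 * z^2) (at z within {a..b})"
      by (rule has_field_derivative_transform_within[where d = 1]) (use z w in auto)
    moreover have "(w has_real_derivative w' z) (at z within {a..b})"
      using w' by (rule has_field_derivative_at_within)
    ultimately show ?thesis
      using vector_derivative_unique_within_closed_interval[of a b z w "w' z"] ab z
      by (simp add: has_real_derivative_iff_has_vector_derivative)
  qed
  show ?thesis
    using w[OF y] w[of a] w[of b] w'_eq[of a] w'_eq[of b] ab
    by (auto intro: cubic_eq_hermite)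
qed

section \<open>Functions with square integrable second derivative\<close>

lemma Cauchy_Schwarz_interval_integral:
  fixes u :: "real \<Rightarrow> real"
  assumes "a \<le> b" and u: "u integrable_on {a..b}" and u2: "(\<lambda>t. (u t)^2) integrable_on {a..b}"
  shows "(integral {a..b} u)^2 \<le> (b - a) * integral {a..b} (\<lambda>t. (u t)^2)"
proof (cases "a = b")
  case False
  define L I U where "L = b - a" and "I = integral {a..b} u" and "U = integral {a..b} (\<lambda>t. (u t)^2)"
  define m where "m = I / L"
  from False assms(1) have L: "L > 0" by (simp add: L_def)
  have "((\<lambda>t. (u t)^2 - 2 * m * u t + m^2) has_integral U - 2 * m * I + m^2 * L) {a..b}"
    unfolding I_def U_def L_def using assms(1)
    by (intro has_integral_add has_integral_diff has_integral_mult_right integrable_integral u u2)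
       (use has_integral_const_real[of "m^2" a b] in \<open>simp add: mult.commute\<close>)
  moreover have "(u t)^2 - 2 * m * u t + m^2 = (u t - m)^2" for t
    by (simp add: power2_eq_square algebra_simps)
  ultimately have "((\<lambda>t. (u t - m)^2) has_integral U - 2 * m * I + m^2 * L) {a..b}"
    by simp
  then have "0 \<le> U - 2 * m * I + m^2 * L"
    by (rule has_integral_nonneg) simp
  also have "U - 2 * m * I + m^2 * L = U - I^2 / L"
    using L by (simp add: m_def power2_eq_square field_simps)
  finally show ?thesis
    using L by (simp add: L_def I_def U_def pos_divide_le_eq mult.commute)
qed simp

lemma square_integrable_imp_absolutely_integrable:
  fixes f :: "real \<Rightarrow> real"
  assumes f: "f integrable_on {a..b}" and f2: "(\<lambda>y. (f y)^2) integrable_on {a..b}"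
  shows "f absolutely_integrable_on {a..b}"
proof (rule measurable_bounded_by_integrable_imp_absolutely_integrable)
  show "f \<in> borel_measurable (lebesgue_on {a..b})"
    using f by (rule integrable_imp_measurable)
  show "(\<lambda>y. (1 + (f y)^2) / 2) integrable_on {a..b}"
    using integrable_add[OF integrable_const_ivl f2, of 1] by simp
  show "norm (f y) \<le> (1 + (f y)^2) / 2" for y
    using zero_le_power2[of "\<bar>f y\<bar> - 1"] by (simp add: power2_eq_square algebra_simps)
qed simp

lemma first_moment_kernel_integrable:
  fixes w :: "real \<Rightarrow> real"
  assumes ab: "a \<le> b" and [measurable]: "w \<in> borel_measurable borel"
    and wi: "integrable lborel w" and w0: "\<And>s. s \<notin> {a..b} \<Longrightarrow> w s = 0"
  shows "integrable (lborel \<Otimes>\<^sub>M lborel) (\<lambda>(s, r). if a \<le> r \<and> r \<le> s then w s else 0)"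
proof (rule lborel_pair.Fubini_integrable)
  have row: "(\<lambda>r. if a \<le> r \<and> r \<le> s then w s else 0) = (\<lambda>r. indicator {a..s} r * w s)" for s
    by (auto simp: indicator_def)
  have "(\<integral>r. norm (indicator {a..s} r * w s) \<partial>lborel) = indicator {a..b} s * ((s - a) * \<bar>w s\<bar>)" for s
  proof -
    have "(\<integral>r. norm (indicator {a..s} r * w s) \<partial>lborel) = measure lborel {a..s} * \<bar>w s\<bar>"
      by (simp add: abs_mult)
    then show ?thesis using w0[of s] by (auto simp: indicator_def)
  qed
  moreover have "integrable lborel (\<lambda>s. indicator {a..b} s * ((s - a) * \<bar>w s\<bar>))"
  proof (rule Bochner_Integration.integrable_bound)
    show "integrable lborel (\<lambda>s. (b - a) * w s)" using wi by simp
    show "AE s in lborel. norm (indicator {a..b} s * ((s - a) * \<bar>w s\<bar>)) \<le> norm ((b - a) * w s)"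
      using ab by (auto simp: indicator_def abs_mult intro!: mult_right_mono)
  qed measurable
  ultimately show "integrable lborel (\<lambda>s. \<integral>r. norm (case (s, r) of (s, r) \<Rightarrow>
      if a \<le> r \<and> r \<le> s then w s else 0) \<partial>lborel)"
    by (simp add: row)
  show "AE s in lborel. integrable lborel
      (\<lambda>r. case (s, r) of (s, r) \<Rightarrow> if a \<le> r \<and> r \<le> s then w s else 0)"
    by (auto simp: row emeasure_lborel_Icc_eq intro!: integrable_mult_left integrable_real_indicator)
qed measurable

lemma has_integral_first_moment_borel:
  fixes w :: "real \<Rightarrow> real"
  assumes ab: "a \<le> b" and wm[measurable]: "w \<in> borel_measurable borel"
    and wi: "integrable lborel w" and w0: "\<And>s. s \<notin> {a..b} \<Longrightarrow> w s = 0"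
  shows "((\<lambda>s. (s - a) * w s) has_integral integral {a..b} (\<lambda>r. integral {r..b} w)) {a..b}"
proof -
  define F where "F = (\<lambda>s r. if a \<le> r \<and> r \<le> s then w s else 0 :: real)"
  have F: "integrable (lborel \<Otimes>\<^sub>M lborel) (\<lambda>(s, r). F s r)"
    unfolding F_def by (rule first_moment_kernel_integrable[OF assms])
  have moment: "(\<integral>r. F s r \<partial>lborel) = indicator {a..b} s * ((s - a) * w s)" for s
  proof -
    have "(\<lambda>r. F s r) = (\<lambda>r. indicator {a..s} r * w s)"
      by (auto simp: F_def indicator_def)
    then have "(\<integral>r. F s r \<partial>lborel) = measure lborel {a..s} * w s"
      by simp
    then show ?thesis using w0[of s] by (auto simp: indicator_def)
  qed
  have tail: "(\<integral>s. F s r \<partial>lborel) = indicator {a..b} r * integral {r..b} w" for r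
  proof -
    have "(\<lambda>s. F s r) = (\<lambda>s. indicator {a..} r * (indicator {r..b} s *\<^sub>R w s))"
      using w0 by (auto simp: F_def indicator_def fun_eq_iff)
    then have "(\<integral>s. F s r \<partial>lborel) = indicator {a..} r * (LINT s:{r..b}|lborel. w s)"
      by (simp add: set_lebesgue_integral_def)
    also have "(LINT s:{r..b}|lborel. w s) = integral {r..b} w"
      using integrable_mult_indicator[OF _ wi, of "{r..b}"]
      by (intro set_borel_integral_eq_integral(2)) (simp add: set_integrable_def)
    finally show ?thesis
      by (cases "r \<le> b") (auto simp: indicator_def)
  qed
  have "set_integrable lborel {a..b} (\<lambda>r. integral {r..b} w)"
    using lborel_pair.integrable_snd[OF F] unfolding tail set_integrable_def by simp
  moreover have si: "set_integrable lborel {a..b} (\<lambda>s. (s - a) * w s)"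
    using lborel_pair.integrable_fst[OF F] unfolding moment set_integrable_def by simp
  moreover have "(LINT r:{a..b}|lborel. integral {r..b} w) = (LINT s:{a..b}|lborel. (s - a) * w s)"
    using lborel_pair.Fubini_integral[OF F]
    unfolding tail moment set_lebesgue_integral_def by simp
  ultimately have "integral {a..b} (\<lambda>s. (s - a) * w s) = integral {a..b} (\<lambda>r. integral {r..b} w)"
    by (simp add: set_borel_integral_eq_integral)
  moreover have "(\<lambda>s. (s - a) * w s) integrable_on {a..b}"
    by (rule set_borel_integral_eq_integral(1)[OF si])
  ultimately show ?thesis
    by (metis has_integral_integrable_integral)
qed

lemma has_integral_first_moment:
  fixes w :: "real \<Rightarrow> real"
  assumes ab: "a \<le> b" and wa: "w absolutely_integrable_on {a..b}"
  shows "((\<lambda>s. (s - a) * w s) has_integral integral {a..b} (\<lambda>r. integral {r..b} w)) {a..b}"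
proof -
  \<comment> \<open>Fubini needs a Borel integrand: pass to a Borel function that equals w off a null set.\<close>
  define f where "f = (\<lambda>x. indicator {a..b} x * w x)"
  have fi: "integrable lebesgue f"
    using wa unfolding absolutely_integrable_on_def set_integrable_def f_def by simp
  then have "f \<in> borel_measurable lebesgue" by (rule borel_measurable_integrable)
  then obtain g' where g'm: "g' \<in> borel_measurable lborel" and ae: "AE x in lborel. f x = g' x"
    using completion_ex_borel_measurable_real by blast
  define w' where "w' = (\<lambda>x. indicator {a..b} x * g' x)"
  have w'm[measurable]: "w' \<in> borel_measurable borel" unfolding w'_def using g'm by measurable
  have ae2: "AE x in lborel. f x = w' x"
    using ae proof eventually_elim
    fix x assume "f x = g' x"
    then show "f x = w' x" by (cases "x \<in> {a..b}") (auto simp: f_def w'_def)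
  qed
  then obtain N where N: "{x \<in> space lborel. \<not> f x = w' x} \<subseteq> N" "N \<in> null_sets lborel"
    using ae2 by (elim AE_E) (auto simp: null_sets_def)
  have negN: "negligible N"
    using N(2) by (simp add: negligible_iff_null_sets null_sets_completionI)
  have fw': "w x = w' x" if "x \<notin> N" "x \<in> {a..b}" for x
  proof -
    have "f x = w' x" using N(1) that(1) by auto
    then show ?thesis using that(2) by (simp add: f_def)
  qed
  have "integrable lebesgue w'"
    using fi ae2 w'm
    by (subst integrable_cong_AE[where g=f]) (auto intro: AE_completion measurable_completion)
  then have w'i: "integrable lborel w'"
    using integrable_completion[of w' lborel] w'm by simp
  have w'0: "w' s = 0" if "s \<notin> {a..b}" for s using that by (simp add: w'_def)
  have H: "((\<lambda>s. (s - a) * w' s) has_integral integral {a..b} (\<lambda>r. integral {r..b} w')) {a..b}"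
    by (rule has_integral_first_moment_borel[OF ab w'm w'i w'0])
  have "integral {a..b} (\<lambda>r. integral {r..b} w') = integral {a..b} (\<lambda>r. integral {r..b} w)"
  proof (rule integral_cong)
    fix r assume r: "r \<in> {a..b}"
    show "integral {r..b} w' = integral {r..b} w"
      by (rule integral_spike[OF negN]) (use fw' r in auto)
  qed
  moreover have "((\<lambda>s. (s - a) * w s) has_integral integral {a..b} (\<lambda>r. integral {r..b} w')) {a..b}"
    by (rule has_integral_spike[OF negN _ H]) (use fw' in auto)
  ultimately show ?thesis by simp
qed

lemma has_integral_affine_mult_second_deriv_eq_0:
  fixes e e' e'' :: "real \<Rightarrow> real"
  assumes ab: "a \<le> b"
    and e_deriv: "\<And>y. y \<in> {a..b} \<Longrightarrow> (e has_real_derivative e' y) (at y)"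
    and e'_eq: "\<And>r s. a \<le> r \<Longrightarrow> r \<le> s \<Longrightarrow> s \<le> b \<Longrightarrow> e' s - e' r = integral {r..s} e''"
    and e''_int: "e'' absolutely_integrable_on {a..b}"
    and ends: "e a = 0" "e b = 0" "e' a = 0" "e' b = 0"
  shows "((\<lambda>s. (c + d * (s - a)) * e'' s) has_integral 0) {a..b}"
proof -
  have "(e'' has_integral 0) {a..b}"
    using integrable_integral[OF set_lebesgue_integral_eq_integral(1)[OF e''_int]] e'_eq[of a b] ends ab
    by simp
  moreover have "((\<lambda>s. (s - a) * e'' s) has_integral 0) {a..b}"
  proof -
    have "(e' has_integral e b - e a) {a..b}"
      using ab e_deriv by (intro fundamental_theorem_of_calculus)
        (auto simp: has_real_derivative_iff_has_vector_derivative[symmetric]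
          intro: has_field_derivative_at_within)
    then have "integral {a..b} (\<lambda>r. - e' r) = 0"
      using ends by (simp add: integral_neg integral_unique)
    moreover have "integral {a..b} (\<lambda>r. integral {r..b} e'') = integral {a..b} (\<lambda>r. - e' r)"
    proof (rule integral_cong)
      show "integral {r..b} e'' = - e' r" if "r \<in> {a..b}" for r
        using e'_eq[of r b] ends that by simp
    qed
    ultimately show ?thesis
      using has_integral_first_moment[OF ab e''_int] by simp
  qed
  ultimately have "((\<lambda>s. c * e'' s + d * ((s - a) * e'' s)) has_integral c * 0 + d * 0) {a..b}"
    by (intro has_integral_add has_integral_mult_right)
  then show ?thesis by (simp add: algebra_simps)
qed

lemma integral_square_le_by_second_deriv:
  fixes e e' e'' :: "real \<Rightarrow> real"
  assumes ab: "a \<le> b"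
    and e_deriv: "\<And>y. y \<in> {a..b} \<Longrightarrow> (e has_real_derivative e' y) (at y)"
    and e'_eq: "\<And>s. s \<in> {a..b} \<Longrightarrow> e' s = integral {a..s} e''"
    and e''_int: "e'' integrable_on {a..b}" and e''_sq_int: "(\<lambda>y. (e'' y)^2) integrable_on {a..b}"
    and e0: "e a = 0"
  shows "integral {a..b} (\<lambda>y. (e y)^2) \<le> (b - a)^4 * integral {a..b} (\<lambda>y. (e'' y)^2)"
proof -
  define l P where "l = b - a" and "P = integral {a..b} (\<lambda>y. (e'' y)^2)"
  have l: "0 \<le> l" using ab by (simp add: l_def)
  have P: "0 \<le> P" unfolding P_def by (intro integral_nonneg e''_sq_int) simp
  have e'_bound: "(e' s)^2 \<le> l * P" if s: "s \<in> {a..b}" for s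
  proof -
    have sub: "{a..s} \<subseteq> {a..b}" using s by simp
    have "(e' s)^2 \<le> (s - a) * integral {a..s} (\<lambda>t. (e'' t)^2)"
      unfolding e'_eq[OF s] using s
      by (intro Cauchy_Schwarz_interval_integral integrable_on_subinterval[OF e''_int sub]
          integrable_on_subinterval[OF e''_sq_int sub]) auto
    also have "\<dots> \<le> l * P"
    proof (rule mult_mono)
      show "integral {a..s} (\<lambda>t. (e'' t)^2) \<le> P"
        unfolding P_def using sub
        by (intro integral_subset_le integrable_on_subinterval[OF e''_sq_int sub] e''_sq_int) auto
      show "0 \<le> integral {a..s} (\<lambda>t. (e'' t)^2)"
        by (intro integral_nonneg integrable_on_subinterval[OF e''_sq_int sub]) auto
    qed (use s l in \<open>auto simp: l_def\<close>)
    finally show ?thesis .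
  qed
  have e_bound: "(e s)^2 \<le> l^3 * P" if s: "s \<in> {a..b}" for s
  proof (cases "s = a")
    case True then show ?thesis using e0 P l by simp
  next
    case False
    with s have "a < s" by simp
    moreover have "\<forall>y. a \<le> y \<and> y \<le> s \<longrightarrow> (e has_real_derivative e' y) (at y)"
      using s e_deriv by simp
    ultimately obtain z where z: "a < z" "z < s" "e s - e a = (s - a) * e' z"
      by (metis MVT2)
    have "(e s)^2 = (s - a)^2 * (e' z)^2" using z e0 by (simp add: power_mult_distrib)
    also have "\<dots> \<le> l^2 * (l * P)"
      using z s by (intro mult_mono power_mono e'_bound) (auto simp: l_def)
    finally show ?thesis by (simp add: power3_eq_cube power2_eq_square algebra_simps)
  qed
  have "continuous_on {a..b} e"
    by (rule continuous_at_imp_continuous_on) (use e_deriv DERIV_isCont in blast)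
  then have "(\<lambda>y. (e y)^2) integrable_on {a..b}"
    by (simp add: integrable_continuous_interval continuous_on_power)
  then have "integral {a..b} (\<lambda>y. (e y)^2) \<le> integral {a..b} (\<lambda>y. l^3 * P)"
    by (intro integral_le e_bound) auto
  also have "\<dots> = l^4 * P" using ab by (simp add: l_def power_def)
  finally show ?thesis by (simp add: l_def P_def)
qed

lemma hermite_interp_error_on_interval:
  fixes g g1 g2 :: "real \<Rightarrow> real"
  assumes ab: "a < b"
    and g: "\<And>y. y \<in> {a..b} \<Longrightarrow> (g has_real_derivative g1 y) (at y)"
    and g1: "\<And>r s. a \<le> r \<Longrightarrow> r \<le> s \<Longrightarrow> s \<le> b \<Longrightarrow> g1 s - g1 r = integral {r..s} g2"
    and g2: "g2 integrable_on {a..b}" and g22: "(\<lambda>y. (g2 y)^2) integrable_on {a..b}"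
  defines "p \<equiv> hermite a b (g a) (g1 a) (g b) (g1 b)"
    and "p2 \<equiv> hermite'' a b (g a) (g1 a) (g b) (g1 b)"
  shows "((\<lambda>y. (g2 y - p2 y)^2) has_integral
           integral {a..b} (\<lambda>y. (g2 y)^2) - integral {a..b} (\<lambda>y. (p2 y)^2)) {a..b}"
    and "integral {a..b} (\<lambda>y. (g y - p y)^2)
           \<le> (b - a)^4 * (integral {a..b} (\<lambda>y. (g2 y)^2) - integral {a..b} (\<lambda>y. (p2 y)^2))"
proof -
  define p1 where "p1 = hermite' a b (g a) (g1 a) (g b) (g1 b)"
  define c d where "c = 2 * hermite_c2 a b (g a) (g1 a) (g b) (g1 b)"
    and "d = 6 * hermite_c3 a b (g a) (g1 a) (g b) (g1 b)"
  have p2_affine: "p2 = (\<lambda>y. c + d * (y - a))"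
    by (simp add: p2_def hermite''_def c_def d_def fun_eq_iff)
  have p2_cont: "continuous_on S p2" for S
    unfolding p2_affine by (intro continuous_intros)
  have p2_int: "p2 integrable_on {r..s}" "(\<lambda>y. (p2 y)^2) integrable_on {r..s}" for r s
    using p2_cont by (auto intro!: integrable_continuous_interval continuous_intros)
  have e: "((\<lambda>y. g y - p y) has_real_derivative g1 y - p1 y) (at y)" if "y \<in> {a..b}" for y
    unfolding p_def p1_def by (intro derivative_intros g that hermite_has_real_derivative)
  have e1: "(g1 s - p1 s) - (g1 r - p1 r) = integral {r..s} (\<lambda>y. g2 y - p2 y)"
    if "a \<le> r" "r \<le> s" "s \<le> b" for r s
  proof -
    have "(p2 has_integral p1 s - p1 r) {r..s}"
      unfolding p1_def p2_def using that
      by (intro fundamental_theorem_of_calculus)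
         (auto simp: has_real_derivative_iff_has_vector_derivative[symmetric]
           intro: has_field_derivative_at_within hermite'_has_real_derivative)
    moreover have "g2 integrable_on {r..s}"
      using that by (intro integrable_on_subinterval[OF g2]) auto
    ultimately show ?thesis
      using g1[OF that] by (simp add: integral_diff p2_int integral_unique)
  qed
  have ends: "p a = g a" "p b = g b" "p1 a = g1 a" "p1 b = g1 b"
    using hermite_endpoints[of a b] ab unfolding p_def p1_def by auto
  have e2: "(\<lambda>y. g2 y - p2 y) integrable_on {a..b}"
    by (intro integrable_diff g2 p2_int)
  have e2_abs: "(\<lambda>y. g2 y - p2 y) absolutely_integrable_on {a..b}"
    by (intro set_integral_diff(1) square_integrable_imp_absolutely_integrable g2 g22
        absolutely_integrable_continuous_real p2_cont)
  have "((\<lambda>y. (c + d * (y - a)) * (g2 y - p2 y)) has_integral 0) {a..b}"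
    using ab e e1 ends e2_abs
    by (intro has_integral_affine_mult_second_deriv_eq_0[where e = "\<lambda>y. g y - p y"
          and e' = "\<lambda>y. g1 y - p1 y"]) auto
  then have orth: "((\<lambda>y. p2 y * (g2 y - p2 y)) has_integral 0) {a..b}"
    by (simp add: p2_affine)
  have "((\<lambda>y. (g2 y)^2 - 2 * (p2 y * (g2 y - p2 y)) - (p2 y)^2) has_integral
      integral {a..b} (\<lambda>y. (g2 y)^2) - 2 * 0 - integral {a..b} (\<lambda>y. (p2 y)^2)) {a..b}"
    by (intro has_integral_diff has_integral_mult_right orth integrable_integral g22 p2_int)
  moreover have "(g2 y)^2 - 2 * (p2 y * (g2 y - p2 y)) - (p2 y)^2 = (g2 y - p2 y)^2" for y
    by (simp add: power2_eq_square algebra_simps)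
  ultimately show pythagoras: "((\<lambda>y. (g2 y - p2 y)^2) has_integral
      integral {a..b} (\<lambda>y. (g2 y)^2) - integral {a..b} (\<lambda>y. (p2 y)^2)) {a..b}"
    by simp
  have "integral {a..b} (\<lambda>y. (g y - p y)^2) \<le> (b - a)^4 * integral {a..b} (\<lambda>y. (g2 y - p2 y)^2)"
  proof (rule integral_square_le_by_second_deriv)
    show "g1 s - p1 s = integral {a..s} (\<lambda>y. g2 y - p2 y)" if "s \<in> {a..b}" for s
      using e1[of a s] ends that by simp
    show "(\<lambda>y. (g2 y - p2 y)^2) integrable_on {a..b}"
      using pythagoras by blast
  qed (use ab e e2 ends in auto)
  then show "integral {a..b} (\<lambda>y. (g y - p y)^2)
      \<le> (b - a)^4 * (integral {a..b} (\<lambda>y. (g2 y)^2) - integral {a..b} (\<lambda>y. (p2 y)^2))"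
    using pythagoras by (simp add: integral_unique)
qed

section \<open>The periodic Hermite spline of a mesh\<close>

lemma tendsto_glue_at:
  fixes f L R :: "real \<Rightarrow> 'a::topological_space"
  assumes "a < y" "y < b" and L: "(L \<longlongrightarrow> D) (at y)" and R: "(R \<longlongrightarrow> D) (at y)"
    and fL: "\<And>z. a < z \<Longrightarrow> z < y \<Longrightarrow> f z = L z" and fR: "\<And>z. y < z \<Longrightarrow> z < b \<Longrightarrow> f z = R z"
  shows "(f \<longlongrightarrow> D) (at y)"
proof -
  have "eventually (\<lambda>z. L z = f z) (at_left y)"
    unfolding eventually_at_left_field using assms(1) fL by (intro exI[of _ a]) auto
  moreover have "(L \<longlongrightarrow> D) (at_left y)"
    using L filterlim_at_split by blast
  ultimately have "(f \<longlongrightarrow> D) (at_left y)"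
    by (rule Lim_transform_eventually[rotated])
  moreover have "eventually (\<lambda>z. R z = f z) (at_right y)"
    unfolding eventually_at_right_field using assms(2) fR by (intro exI[of _ b]) auto
  moreover have "(R \<longlongrightarrow> D) (at_right y)"
    using R filterlim_at_split by blast
  ultimately show ?thesis
    using Lim_transform_eventually filterlim_at_split by blast
qed

lemma has_real_derivative_glue:
  fixes f L R :: "real \<Rightarrow> real"
  assumes "a < y" "y < b"
    and L: "(L has_real_derivative D) (at y)" and R: "(R has_real_derivative D) (at y)"
    and fL: "\<And>z. a < z \<Longrightarrow> z \<le> y \<Longrightarrow> f z = L z" and fR: "\<And>z. y \<le> z \<Longrightarrow> z < b \<Longrightarrow> f z = R z"
  shows "(f has_real_derivative D) (at y)"
proof -
  have "((\<lambda>z. (f z - f y) / (z - y)) \<longlongrightarrow> D) (at y)"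
  proof (rule tendsto_glue_at[OF assms(1,2)])
    show "((\<lambda>z. (L z - L y) / (z - y)) \<longlongrightarrow> D) (at y)" "((\<lambda>z. (R z - R y) / (z - y)) \<longlongrightarrow> D) (at y)"
      using L R by (simp_all add: has_field_derivative_iff)
  qed (simp_all add: fL fR)
  then show ?thesis by (simp add: has_field_derivative_iff)
qed

lemma isCont_glue:
  fixes f L R :: "real \<Rightarrow> 'a::topological_space"
  assumes "a < y" "y < b" and L: "isCont L y" and R: "isCont R y"
    and fL: "\<And>z. a < z \<Longrightarrow> z \<le> y \<Longrightarrow> f z = L z" and fR: "\<And>z. y \<le> z \<Longrightarrow> z < b \<Longrightarrow> f z = R z"
  shows "isCont f y"
proof -
  have "(L \<longlongrightarrow> f y) (at y)" "(R \<longlongrightarrow> f y) (at y)"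
    using L R fL[of y] fR[of y] assms(1,2) by (simp_all add: isCont_def)
  then have "(f \<longlongrightarrow> f y) (at y)"
    by (rule tendsto_glue_at[OF assms(1,2)]) (simp_all add: fL fR)
  then show ?thesis by (simp add: isCont_def)
qed

lemma periodic_add_of_int:
  fixes f :: "real \<Rightarrow> 'a"
  assumes p: "\<And>y. f (y + 1) = f y"
  shows "f (y + of_int n) = f y"
proof -
  have nat: "f (z + of_nat m) = f z" for z m
  proof (induction m)
    case (Suc m)
    have "z + of_nat (Suc m) = (z + of_nat m) + 1" by simp
    then show ?case using p[of "z + of_nat m"] Suc.IH by metis
  qed simp
  show ?thesis
  proof (cases "n \<ge> 0")
    case True
    then show ?thesis using nat[of y "nat n"] by simp
  next
    case False
    then show ?thesis using nat[of "y + of_int n" "nat (- n)"] by simp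
  qed
qed

lemma periodic_derivative:
  fixes f f' :: "real \<Rightarrow> real"
  assumes p: "\<And>y. f (y + 1) = f y" and d: "\<And>y. (f has_real_derivative f' y) (at y)"
  shows "f' (y + 1) = f' y"
proof -
  have "((\<lambda>z. f (z + 1)) has_real_derivative f' (y + 1)) (at y)"
    using d[of "y + 1"] by (simp add: DERIV_shift)
  then have "(f has_real_derivative f' (y + 1)) (at y)" using p by simp
  then show ?thesis using d[of y] by (rule DERIV_unique)
qed

lemma space_mesh_cell:
  assumes sm: "space_mesh M x" and z: "0 \<le> z" "z < 1"
  obtains j where "j < M" "x j \<le> z" "z < x (Suc j)"
proof -
  define S where "S = {j. j < M \<and> x j \<le> z}"
  have "0 \<in> S" using sm z by (simp add: S_def space_mesh_def)
  moreover have "finite S" by (simp add: S_def)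
  ultimately have j: "Max S \<in> S" "\<And>i. i \<in> S \<Longrightarrow> i \<le> Max S"
    using Max_in Max_ge by blast+
  have "z < x (Suc (Max S))"
  proof (cases "Suc (Max S) < M")
    case True
    moreover have "Suc (Max S) \<notin> S" using j(2)[of "Suc (Max S)"] by auto
    ultimately show ?thesis by (simp add: S_def)
  next
    case False
    with j(1) have "Suc (Max S) = M" by (simp add: S_def)
    then show ?thesis using sm z by (simp add: space_mesh_def)
  qed
  moreover from j(1) have "Max S < M" "x (Max S) \<le> z" by (simp_all add: S_def)
  ultimately show thesis using that by blast
qed

lemma space_mesh_le:
  assumes "space_mesh M x" "i \<le> j" "j \<le> M"
  shows "x i \<le> x j"
proof (rule lift_Suc_mono_le_ivl[of "{..<M}" x])
  show "x n \<le> x (Suc n)" if "n \<in> {..<M}" for n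
    using assms(1) that unfolding space_mesh_def by (blast intro: less_imp_le)
qed (use assms in auto)

lemma mesh_h_ge:
  assumes "j < M"
  shows "x (Suc j) - x j \<le> mesh_h M x"
  unfolding mesh_h_def using assms by (intro Max_ge) auto

lemma has_integral_space_mesh_sum:
  fixes f :: "real \<Rightarrow> real"
  assumes sm: "space_mesh M x" and I: "\<And>j. j < M \<Longrightarrow> (f has_integral I j) {x j..x (Suc j)}"
  shows "(f has_integral (\<Sum>j<M. I j)) {0..1}"
proof -
  have "(f has_integral (\<Sum>j<m. I j)) {x 0..x m}" if "m \<le> M" for m
    using that
  proof (induction m)
    case 0
    show ?case using has_integral_null_real[of "x 0" "x 0" f] by simp
  next
    case (Suc m)
    have "(f has_integral (\<Sum>j<m. I j) + I m) {x 0..x (Suc m)}"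
      using Suc space_mesh_le[OF sm, of 0 m] space_mesh_le[OF sm, of m "Suc m"]
      by (intro has_integral_combine[of "x 0" "x m" "x (Suc m)"] I) auto
    then show ?case by simp
  qed
  from this[of M] show ?thesis using sm by (simp add: space_mesh_def)
qed

(* The 1-periodic extension of the mesh: knot M x (n * M + j) = x j + n for j < M. *)
definition knot :: "nat \<Rightarrow> (nat \<Rightarrow> real) \<Rightarrow> int \<Rightarrow> real" where
  "knot M x k = x (nat (k mod int M)) + of_int (k div int M)"

lemma knot_eq:
  assumes "j < M"
  shows "knot M x (n * int M + int j) = x j + of_int n"
  using assms by (simp add: knot_def)

lemma knot_Suc_eq:
  assumes sm: "space_mesh M x" and j: "j < M"
  shows "knot M x (n * int M + int j + 1) = x (Suc j) + of_int n"
proof (cases "Suc j < M")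
  case True
  have "n * int M + int j + 1 = n * int M + int (Suc j)" by simp
  then show ?thesis using knot_eq[OF True, of x n] by metis
next
  case False
  with j have "Suc j = M" by simp
  then have "n * int M + int j + 1 = (n + 1) * int M + int 0" by (simp add: algebra_simps)
  then show ?thesis
    using knot_eq[of 0 M x "n + 1"] j sm \<open>Suc j = M\<close> by (simp add: space_mesh_def)
qed

lemma knot_of_nat:
  assumes "space_mesh M x" "j < M"
  shows "knot M x (int j) = x j" "knot M x (int j + 1) = x (Suc j)"
  using knot_eq[OF assms(2), of x 0] knot_Suc_eq[OF assms, of 0] by simp_all

lemma knot_decompose:
  assumes "space_mesh M x"
  obtains n j where "j < M" "k = n * int M + int j"
proof
  have "M \<ge> 1" using assms by (simp add: space_mesh_def)
  then show "nat (k mod int M) < M" "k = k div int M * int M + int (nat (k mod int M))"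
    by (simp_all add: nat_less_iff)
qed

lemma knot_less_Suc:
  assumes sm: "space_mesh M x"
  shows "knot M x k < knot M x (k + 1)"
proof -
  obtain n j where "j < M" "k = n * int M + int j" using knot_decompose[OF sm] .
  then show ?thesis
    using knot_eq[of j M x n] knot_Suc_eq[OF sm, of j n] sm by (simp add: space_mesh_def)
qed

lemma knot_add_M:
  assumes sm: "space_mesh M x"
  shows "knot M x (k + int M) = knot M x k + 1"
proof -
  obtain n j where j: "j < M" and k: "k = n * int M + int j" using knot_decompose[OF sm] .
  have "knot M x (k + int M) = knot M x ((n + 1) * int M + int j)"
    by (simp add: k algebra_simps)
  also have "\<dots> = knot M x k + 1"
    using knot_eq[OF j, of x "n + 1"] knot_eq[OF j, of x n] k by simp
  finally show ?thesis .
qed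

lemma strict_mono_knot:
  assumes sm: "space_mesh M x"
  shows "strict_mono (knot M x)"
proof (rule strict_monoI)
  fix k k' :: int
  assume "k < k'"
  define f where "f n = knot M x (k + int n)" for n
  have "f (Suc n) = knot M x (k + int n + 1)" for n
    by (simp add: f_def algebra_simps)
  then have "f n < f (Suc n)" for n
    using knot_less_Suc[OF sm, of "k + int n"] by (simp add: f_def)
  moreover have "0 < nat (k' - k)" using \<open>k < k'\<close> by simp
  ultimately have "f 0 < f (nat (k' - k))" by (rule lift_Suc_mono_less)
  then show "knot M x k < knot M x k'"
    using \<open>k < k'\<close> by (simp add: f_def)
qed

lemma ex1_knot_cell:
  assumes sm: "space_mesh M x"
  shows "\<exists>!k. knot M x k \<le> y \<and> y < knot M x (k + 1)"
proof -
  define n where "n = \<lfloor>y\<rfloor>"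
  have "0 \<le> y - of_int n" "y - of_int n < 1" unfolding n_def by linarith+
  then obtain j where j: "j < M" "x j \<le> y - of_int n" "y - of_int n < x (Suc j)"
    using space_mesh_cell[OF sm] by blast
  define w where "w = n * int M + int j"
  have w: "knot M x w \<le> y" "y < knot M x (w + 1)"
    using j knot_eq[OF j(1)] knot_Suc_eq[OF sm j(1)] by (simp_all add: w_def)
  show ?thesis
  proof (rule ex1I[of _ w])
    show "knot M x w \<le> y \<and> y < knot M x (w + 1)" using w by simp
    fix k assume "knot M x k \<le> y \<and> y < knot M x (k + 1)"
    with w have "knot M x k < knot M x (w + 1)" "knot M x w < knot M x (k + 1)" by linarith+
    then have "k < w + 1" "w < k + 1"
      by (simp_all add: strict_mono_less[OF strict_mono_knot[OF sm]])
    then show "k = w" by simp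
  qed
qed

definition cell :: "nat \<Rightarrow> (nat \<Rightarrow> real) \<Rightarrow> real \<Rightarrow> int" where
  "cell M x y = (THE k. knot M x k \<le> y \<and> y < knot M x (k + 1))"

lemma cell_bounds:
  assumes "space_mesh M x"
  shows "knot M x (cell M x y) \<le> y" "y < knot M x (cell M x y + 1)"
  using theI'[OF ex1_knot_cell[OF assms, of y]] unfolding cell_def by auto

lemma cell_eqI:
  assumes "space_mesh M x" "knot M x k \<le> y" "y < knot M x (k + 1)"
  shows "cell M x y = k"
  unfolding cell_def using ex1_knot_cell[OF assms(1), of y] assms(2,3) by (intro the1_equality) auto

definition cell_hermite ::
    "hermite_form \<Rightarrow> nat \<Rightarrow> (nat \<Rightarrow> real) \<Rightarrow> (real \<Rightarrow> real) \<Rightarrow> (real \<Rightarrow> real) \<Rightarrow>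
      int \<Rightarrow> real \<Rightarrow> real" where
  "cell_hermite H M x g g1 k = H (knot M x k) (knot M x (k + 1))
     (g (knot M x k)) (g1 (knot M x k)) (g (knot M x (k + 1))) (g1 (knot M x (k + 1)))"

definition hermite_spline ::
    "hermite_form \<Rightarrow> nat \<Rightarrow> (nat \<Rightarrow> real) \<Rightarrow> (real \<Rightarrow> real) \<Rightarrow> (real \<Rightarrow> real) \<Rightarrow>
      real \<Rightarrow> real" where
  "hermite_spline H M x g g1 y = cell_hermite H M x g g1 (cell M x y) y"

lemma cell_hermite_has_real_derivative:
  "(cell_hermite hermite M x g g1 k has_real_derivative cell_hermite hermite' M x g g1 k y) (at y)"
  "(cell_hermite hermite' M x g g1 k has_real_derivative cell_hermite hermite'' M x g g1 k y) (at y)"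
  unfolding cell_hermite_def by (rule hermite_has_real_derivative hermite'_has_real_derivative)+

lemma cell_hermite_knots:
  assumes "space_mesh M x"
  shows "cell_hermite hermite M x g g1 k (knot M x k) = g (knot M x k)"
    "cell_hermite hermite' M x g g1 k (knot M x k) = g1 (knot M x k)"
    "cell_hermite hermite M x g g1 k (knot M x (k + 1)) = g (knot M x (k + 1))"
    "cell_hermite hermite' M x g g1 k (knot M x (k + 1)) = g1 (knot M x (k + 1))"
  using hermite_endpoints[of "knot M x k" "knot M x (k + 1)"] knot_less_Suc[OF assms, of k]
  unfolding cell_hermite_def by auto

lemma hermite_spline_on_cell:
  assumes sm: "space_mesh M x" and y: "knot M x k \<le> y" "y \<le> knot M x (k + 1)"
  shows "hermite_spline hermite M x g g1 y = cell_hermite hermite M x g g1 k y"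
    and "hermite_spline hermite' M x g g1 y = cell_hermite hermite' M x g g1 k y"
proof -
  have "hermite_spline H M x g g1 y = cell_hermite H M x g g1 k y"
    if "H = hermite \<or> H = hermite'" for H
  proof (cases "y < knot M x (k + 1)")
    case True
    then show ?thesis using cell_eqI[OF sm y(1) True] by (simp add: hermite_spline_def)
  next
    case False
    with y have yk: "y = knot M x (k + 1)" by simp
    then have "cell M x y = k + 1"
      using cell_eqI[OF sm, of "k + 1" y] knot_less_Suc[OF sm, of "k + 1"] by simp
    then show ?thesis
      using that cell_hermite_knots[OF sm, of g g1 "k + 1"] cell_hermite_knots[OF sm, of g g1 k] yk
      by (auto simp: hermite_spline_def)
  qed
  then show "hermite_spline hermite M x g g1 y = cell_hermite hermite M x g g1 k y"
    and "hermite_spline hermite' M x g g1 y = cell_hermite hermite' M x g g1 k y"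
    by simp_all
qed

lemma hermite_spline_near:
  assumes sm: "space_mesh M x"
  obtains a b i j where "a < y" "y < b"
    "\<And>z. a < z \<Longrightarrow> z \<le> y \<Longrightarrow> hermite_spline hermite M x g g1 z = cell_hermite hermite M x g g1 i z
        \<and> hermite_spline hermite' M x g g1 z = cell_hermite hermite' M x g g1 i z"
    "\<And>z. y \<le> z \<Longrightarrow> z < b \<Longrightarrow> hermite_spline hermite M x g g1 z = cell_hermite hermite M x g g1 j z
        \<and> hermite_spline hermite' M x g g1 z = cell_hermite hermite' M x g g1 j z"
proof -
  define k where "k = cell M x y"
  have k: "knot M x k \<le> y" "y < knot M x (k + 1)"
    using cell_bounds[OF sm, of y] by (simp_all add: k_def)
  have right: "hermite_spline hermite M x g g1 z = cell_hermite hermite M x g g1 k z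
      \<and> hermite_spline hermite' M x g g1 z = cell_hermite hermite' M x g g1 k z"
    if "knot M x k \<le> z" "z < knot M x (k + 1)" for z
    using hermite_spline_on_cell[OF sm that(1)] that(2) by simp
  show thesis
  proof (cases "knot M x k < y")
    case True
    show thesis
      by (rule that[OF True k(2), of k k]) (use right k in auto)
  next
    case False
    with k have yk: "y = knot M x k" by simp
    have "knot M x (k - 1) < y" using knot_less_Suc[OF sm, of "k - 1"] yk by simp
    moreover have "hermite_spline hermite M x g g1 z = cell_hermite hermite M x g g1 (k - 1) z
        \<and> hermite_spline hermite' M x g g1 z = cell_hermite hermite' M x g g1 (k - 1) z"
      if "knot M x (k - 1) < z" "z \<le> y" for z
      using hermite_spline_on_cell[OF sm, of "k - 1" z] that yk by simp
    ultimately show thesis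
      by (rule that[OF _ k(2)]) (use right yk in auto)
  qed
qed

lemma hermite_spline_has_real_derivative:
  assumes sm: "space_mesh M x"
  shows "(hermite_spline hermite M x g g1 has_real_derivative hermite_spline hermite' M x g g1 y) (at y)"
proof -
  obtain a b i j where ab: "a < y" "y < b"
    and i: "\<And>z. a < z \<Longrightarrow> z \<le> y \<Longrightarrow> hermite_spline hermite M x g g1 z = cell_hermite hermite M x g g1 i z
        \<and> hermite_spline hermite' M x g g1 z = cell_hermite hermite' M x g g1 i z"
    and j: "\<And>z. y \<le> z \<Longrightarrow> z < b \<Longrightarrow> hermite_spline hermite M x g g1 z = cell_hermite hermite M x g g1 j z
        \<and> hermite_spline hermite' M x g g1 z = cell_hermite hermite' M x g g1 j z"
    using hermite_spline_near[OF sm] by blast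
  show ?thesis
  proof (rule has_real_derivative_glue[OF ab])
    show "(cell_hermite hermite M x g g1 i has_real_derivative hermite_spline hermite' M x g g1 y) (at y)"
      using cell_hermite_has_real_derivative(1)[of M x g g1 i y] i[OF ab(1)] by simp
    show "(cell_hermite hermite M x g g1 j has_real_derivative hermite_spline hermite' M x g g1 y) (at y)"
      using cell_hermite_has_real_derivative(1)[of M x g g1 j y] j[OF _ ab(2)] by simp
  qed (simp_all add: i j)
qed

lemma isCont_hermite_spline':
  assumes sm: "space_mesh M x"
  shows "isCont (hermite_spline hermite' M x g g1) y"
proof -
  obtain a b i j where ab: "a < y" "y < b"
    and i: "\<And>z. a < z \<Longrightarrow> z \<le> y \<Longrightarrow> hermite_spline hermite' M x g g1 z = cell_hermite hermite' M x g g1 i z"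
    and j: "\<And>z. y \<le> z \<Longrightarrow> z < b \<Longrightarrow> hermite_spline hermite' M x g g1 z = cell_hermite hermite' M x g g1 j z"
    using hermite_spline_near[OF sm, of y g g1] by metis
  have cont: "isCont (cell_hermite hermite' M x g g1 k) y" for k
    using cell_hermite_has_real_derivative(2) by (rule DERIV_isCont)
  show ?thesis by (rule isCont_glue[OF ab cont cont i j])
qed

lemma hermite_spline_periodic:
  assumes sm: "space_mesh M x" and gp: "\<And>y. g (y + 1) = g y" and g1p: "\<And>y. g1 (y + 1) = g1 y"
  shows "hermite_spline hermite M x g g1 (y + 1) = hermite_spline hermite M x g g1 y"
proof -
  define k where "k = cell M x y"
  have k: "knot M x k \<le> y" "y < knot M x (k + 1)" using cell_bounds[OF sm, of y] by (simp_all add: k_def)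
  have lo: "knot M x (k + int M) = knot M x k + 1" by (rule knot_add_M[OF sm])
  have hi: "knot M x (k + int M + 1) = knot M x (k + 1) + 1"
    using knot_add_M[OF sm, of "k + 1"] by (simp add: algebra_simps)
  have "cell M x (y + 1) = k + int M" using k lo hi by (intro cell_eqI[OF sm]) auto
  then have "hermite_spline hermite M x g g1 (y + 1) = cell_hermite hermite M x g g1 (k + int M) (y + 1)"
    by (simp add: hermite_spline_def)
  also have "\<dots> = cell_hermite hermite M x g g1 k y"
    unfolding cell_hermite_def lo hi gp g1p by (rule hermite_shift)
  finally show ?thesis by (simp add: hermite_spline_def k_def)
qed

lemma hermite_spline_in_Vh:
  assumes sm: "space_mesh M x" and gp: "\<And>y. g (y + 1) = g y" and g1p: "\<And>y. g1 (y + 1) = g1 y"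
  shows "hermite_spline hermite M x g g1 \<in> Vh M x"
  unfolding Vh_def
proof (intro CollectI conjI allI impI)
  show "hermite_spline hermite M x g g1 (y + 1) = hermite_spline hermite M x g g1 y" for y
    using sm gp g1p by (rule hermite_spline_periodic)
  show "\<exists>v'. continuous_on UNIV v'
      \<and> (\<forall>y. (hermite_spline hermite M x g g1 has_real_derivative v' y) (at y))"
    using isCont_hermite_spline'[OF sm] hermite_spline_has_real_derivative[OF sm]
    by (blast intro: continuous_at_imp_continuous_on)
  fix j assume j: "j < M"
  obtain c0 c1 c2 c3
    where c: "\<And>y. cell_hermite hermite M x g g1 (int j) y = c0 + c1 * y + c2 * y^2 + c3 * y^3"
    using hermite_is_cubic unfolding cell_hermite_def by blast
  have "hermite_spline hermite M x g g1 y = c0 + c1 * y + c2 * y^2 + c3 * y^3"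
    if "y \<in> {x j..x (Suc j)}" for y
    using hermite_spline_on_cell(1)[OF sm, of "int j" y g g1] knot_of_nat[OF sm j] that c by simp
  then show "\<exists>c0 c1 c2 c3. \<forall>y\<in>{x j..x (Suc j)}.
      hermite_spline hermite M x g g1 y = c0 + c1 * y + c2 * y^2 + c3 * y^3"
    by blast
qed

lemma hermite_spline_interpolates:
  assumes sm: "space_mesh M x" and gd: "\<And>y. (g has_real_derivative g1 y) (at y)" and j: "j < M"
  shows "hermite_spline hermite M x g g1 (x j) = g (x j)"
    and "deriv (hermite_spline hermite M x g g1) (x j) = deriv g (x j)"
proof -
  have k: "knot M x (int j) \<le> x j" "x j \<le> knot M x (int j + 1)"
    using knot_of_nat[OF sm j] knot_less_Suc[OF sm, of "int j"] by auto
  show "hermite_spline hermite M x g g1 (x j) = g (x j)"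
    using hermite_spline_on_cell(1)[OF sm k] cell_hermite_knots(1)[OF sm, of g g1 "int j"]
      knot_of_nat[OF sm j]
    by simp
  have "deriv (hermite_spline hermite M x g g1) (x j) = hermite_spline hermite' M x g g1 (x j)"
    by (rule DERIV_imp_deriv[OF hermite_spline_has_real_derivative[OF sm]])
  also have "\<dots> = g1 (x j)"
    using hermite_spline_on_cell(2)[OF sm k] cell_hermite_knots(2)[OF sm, of g g1 "int j"]
      knot_of_nat[OF sm j]
    by simp
  also have "\<dots> = deriv g (x j)" by (rule DERIV_imp_deriv[OF gd, symmetric])
  finally show "deriv (hermite_spline hermite M x g g1) (x j) = deriv g (x j)" .
qed

lemma Vh_eq_cell_hermite:
  assumes sm: "space_mesh M x" and w: "w \<in> Vh M x" and w': "\<And>y. (w has_real_derivative w' y) (at y)"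
    and j: "j < M" and y: "y \<in> {x j..x (Suc j)}"
  shows "w y = cell_hermite hermite M x w w' (int j) y"
proof -
  have ab: "x j < x (Suc j)" using sm j by (simp add: space_mesh_def)
  obtain c0 c1 c2 c3 where "\<forall>z\<in>{x j..x (Suc j)}. w z = c0 + c1 * z + c2 * z^2 + c3 * z^3"
    using w j unfolding Vh_def by blast
  then have "w y = hermite (x j) (x (Suc j)) (w (x j)) (w' (x j)) (w (x (Suc j))) (w' (x (Suc j))) y"
    using ab w' y by (intro cubic_on_interval_eq_hermite[of _ _ w c0 c1 c2 c3]) simp_all
  then show ?thesis by (simp add: cell_hermite_def knot_of_nat[OF sm j])
qed

lemma Vh_eq_hermite_spline:
  assumes sm: "space_mesh M x"
    and gp: "\<And>y. g (y + 1) = g y" and gd: "\<And>y. (g has_real_derivative g1 y) (at y)"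
    and w: "w \<in> Vh M x"
    and wx: "\<And>j. j < M \<Longrightarrow> w (x j) = g (x j) \<and> deriv w (x j) = deriv g (x j)"
  shows "w = hermite_spline hermite M x g g1"
proof
  have g1p: "g1 (y + 1) = g1 y" for y by (rule periodic_derivative[OF gp gd])
  have wp: "w (y + 1) = w y" for y using w by (simp add: Vh_def)
  obtain w' where w': "\<And>y. (w has_real_derivative w' y) (at y)"
    using w by (auto simp: Vh_def)
  have w'p: "w' (y + 1) = w' y" for y by (rule periodic_derivative[OF wp w'])
  have dw: "deriv w y = w' y" and dg: "deriv g y = g1 y" for y
    using DERIV_imp_deriv[OF w'] DERIV_imp_deriv[OF gd] by simp_all
  have data: "w (x j) = g (x j) \<and> w' (x j) = g1 (x j)" if "j \<le> M" for j
  proof (cases "j < M")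
    case True
    then show ?thesis using wx[OF True] by (simp add: dw dg)
  next
    case False
    with that sm have "j = M" "0 < M" "x 0 = 0" "x M = 1" by (simp_all add: space_mesh_def)
    moreover have "w (x 0) = g (x 0) \<and> w' (x 0) = g1 (x 0)"
      using wx[OF \<open>0 < M\<close>] by (simp add: dw dg)
    ultimately show ?thesis
      using wp[of 0] w'p[of 0] gp[of 0] g1p[of 0] by simp
  qed
  have on_cell: "w y = hermite_spline hermite M x g g1 y"
    if j: "j < M" and y: "x j \<le> y" "y \<le> x (Suc j)" for j y
  proof -
    have "w y = cell_hermite hermite M x g g1 (int j) y"
      using Vh_eq_cell_hermite[OF sm w w' j] data[of j] data[of "Suc j"] j y
      by (simp add: cell_hermite_def knot_of_nat[OF sm j])
    then show ?thesis
      using hermite_spline_on_cell(1)[OF sm, of "int j" y g g1] knot_of_nat[OF sm j] y by simp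
  qed
  fix y :: real
  define n where "n = \<lfloor>y\<rfloor>"
  have "0 \<le> y - of_int n" "y - of_int n < 1" unfolding n_def by linarith+
  then obtain j where "j < M" "x j \<le> y - of_int n" "y - of_int n < x (Suc j)"
    using space_mesh_cell[OF sm] by blast
  then have "w (y - of_int n) = hermite_spline hermite M x g g1 (y - of_int n)"
    by (intro on_cell) auto
  moreover have "hermite_spline hermite M x g g1 (z + 1) = hermite_spline hermite M x g g1 z" for z
    using sm gp g1p by (rule hermite_spline_periodic)
  ultimately show "w y = hermite_spline hermite M x g g1 y"
    using periodic_add_of_int[of w "y - of_int n" n] wp
      periodic_add_of_int[of "hermite_spline hermite M x g g1" "y - of_int n" n] by simp
qed

lemma interp_eq_hermite_spline:
  assumes sm: "space_mesh M x" and g: "H2_per g g1 g2"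
  shows "interp M x g = hermite_spline hermite M x g g1"
  unfolding interp_def
proof (rule the_equality)
  have gp: "\<And>y. g (y + 1) = g y" and gd: "\<And>y. (g has_real_derivative g1 y) (at y)"
    using g by (auto simp: H2_per_def)
  have g1p: "\<And>y. g1 (y + 1) = g1 y"
    using gp gd by (rule periodic_derivative)
  show "hermite_spline hermite M x g g1 \<in> Vh M x \<and> (\<forall>j<M. hermite_spline hermite M x g g1 (x j) = g (x j)
      \<and> deriv (hermite_spline hermite M x g g1) (x j) = deriv g (x j))"
    using hermite_spline_in_Vh[of M x g g1, OF sm gp g1p] hermite_spline_interpolates[OF sm gd] by blast
  show "w = hermite_spline hermite M x g g1"
    if "w \<in> Vh M x \<and> (\<forall>j<M. w (x j) = g (x j) \<and> deriv w (x j) = deriv g (x j))" for w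
    using Vh_eq_hermite_spline[OF sm gp gd, of w] that by blast
qed

lemma deriv2_hermite_spline:
  assumes sm: "space_mesh M x" and j: "j < M" and y: "x j < y" "y < x (Suc j)"
  shows "deriv (deriv (hermite_spline hermite M x g g1)) y = cell_hermite hermite'' M x g g1 (int j) y"
proof -
  have "deriv (hermite_spline hermite M x g g1) = hermite_spline hermite' M x g g1"
    using DERIV_imp_deriv[OF hermite_spline_has_real_derivative[OF sm]] by blast
  moreover have "(hermite_spline hermite' M x g g1 has_real_derivative
      cell_hermite hermite'' M x g g1 (int j) y) (at y)"
  proof (rule has_field_derivative_transform_within_open[OF cell_hermite_has_real_derivative(2)])
    show "cell_hermite hermite' M x g g1 (int j) z = hermite_spline hermite' M x g g1 z"
      if "z \<in> {x j<..<x (Suc j)}" for z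
      using hermite_spline_on_cell(2)[OF sm, of "int j" z g g1] knot_of_nat[OF sm j] that by simp
  qed (use y in auto)
  ultimately show ?thesis by (simp add: DERIV_imp_deriv)
qed

section \<open>Stability of the interpolant\<close>

lemma hermite_spline_error_on_cell:
  assumes sm: "space_mesh M x" and g: "H2_per g g1 g2" and j: "j < M"
  defines "v \<equiv> hermite_spline hermite M x g g1"
  shows "(\<lambda>y. (deriv (deriv v) y)^2) integrable_on {x j..x (Suc j)}"
    and "integral {x j..x (Suc j)} (\<lambda>y. (g y - v y)^2)
      \<le> mesh_h M x ^ 4 * (integral {x j..x (Suc j)} (\<lambda>y. (g2 y)^2)
                         - integral {x j..x (Suc j)} (\<lambda>y. (deriv (deriv v) y)^2))"
proof -
  have gd: "\<And>y. (g has_real_derivative g1 y) (at y)"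
    and g2: "\<And>a b. g2 integrable_on {a..b}" and g22: "\<And>a b. (\<lambda>y. (g2 y)^2) integrable_on {a..b}"
    and g1: "\<And>a b. a \<le> b \<Longrightarrow> g1 b - g1 a = integral {a..b} g2"
    using g by (auto simp: H2_per_def)
  have ab: "x j < x (Suc j)" using sm j by (simp add: space_mesh_def)
  define p p2 where "p = cell_hermite hermite M x g g1 (int j)"
    and "p2 = cell_hermite hermite'' M x g g1 (int j)"
  have p: "p = hermite (x j) (x (Suc j)) (g (x j)) (g1 (x j)) (g (x (Suc j))) (g1 (x (Suc j)))"
    and p2: "p2 = hermite'' (x j) (x (Suc j)) (g (x j)) (g1 (x j)) (g (x (Suc j))) (g1 (x (Suc j)))"
    by (simp_all add: p_def p2_def cell_hermite_def knot_of_nat[OF sm j])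
  note local = hermite_interp_error_on_interval[OF ab gd g1 g2 g22, folded p p2]
  have "((\<lambda>y. (p2 y)^2) has_integral integral {x j..x (Suc j)} (\<lambda>y. (p2 y)^2)) {x j..x (Suc j)}"
    unfolding p2 hermite''_def
    by (intro integrable_integral integrable_continuous_interval continuous_intros)
  then have v'': "((\<lambda>y. (deriv (deriv v) y)^2) has_integral integral {x j..x (Suc j)} (\<lambda>y. (p2 y)^2))
      {x j..x (Suc j)}"
    by (rule has_integral_spike_finite[of "{x j, x (Suc j)}", rotated 2])
       (auto simp: v_def p2_def deriv2_hermite_spline[OF sm j])
  then show "(\<lambda>y. (deriv (deriv v) y)^2) integrable_on {x j..x (Suc j)}" by blast
  have "0 \<le> integral {x j..x (Suc j)} (\<lambda>y. (g2 y)^2) - integral {x j..x (Suc j)} (\<lambda>y. (p2 y)^2)"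
    using has_integral_nonneg[OF local(1)] by simp
  moreover have "v y = p y" if "y \<in> {x j..x (Suc j)}" for y
    using hermite_spline_on_cell(1)[OF sm, of "int j" y g g1] knot_of_nat[OF sm j] that
    by (simp add: v_def p_def)
  then have "integral {x j..x (Suc j)} (\<lambda>y. (g y - v y)^2)
      = integral {x j..x (Suc j)} (\<lambda>y. (g y - p y)^2)"
    by (intro integral_cong) simp
  ultimately show "integral {x j..x (Suc j)} (\<lambda>y. (g y - v y)^2)
      \<le> mesh_h M x ^ 4 * (integral {x j..x (Suc j)} (\<lambda>y. (g2 y)^2)
                         - integral {x j..x (Suc j)} (\<lambda>y. (deriv (deriv v) y)^2))"
    using local(2) ab mesh_h_ge[OF j, of x] integral_unique[OF v'']
    by (smt (verit) mult_right_mono power_mono)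
qed

lemma hermite_spline_error:
  assumes sm: "space_mesh M x" and g: "H2_per g g1 g2"
  defines "v \<equiv> hermite_spline hermite M x g g1"
  shows "integral {0..1} (\<lambda>y. (g y - v y)^2)
    \<le> mesh_h M x ^ 4 * (integral {0..1} (\<lambda>y. (g2 y)^2) - integral {0..1} (\<lambda>y. (deriv (deriv v) y)^2))"
proof -
  define E G Q where "E j = integral {x j..x (Suc j)} (\<lambda>y. (g y - v y)^2)"
    and "G j = integral {x j..x (Suc j)} (\<lambda>y. (g2 y)^2)"
    and "Q j = integral {x j..x (Suc j)} (\<lambda>y. (deriv (deriv v) y)^2)" for j
  have "(g has_real_derivative g1 y) (at y)" for y
    using g by (simp add: H2_per_def)
  then have "continuous_on {a..b} (\<lambda>y. (g y - v y)^2)" for a b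
    using hermite_spline_has_real_derivative[OF sm] unfolding v_def
    by (intro continuous_intros) (blast intro: DERIV_continuous_on has_field_derivative_at_within)+
  then have "((\<lambda>y. (g y - v y)^2) has_integral (\<Sum>j<M. E j)) {0..1}"
    unfolding E_def
    by (intro has_integral_space_mesh_sum[OF sm] integrable_integral integrable_continuous_interval)
  moreover have "((\<lambda>y. (g2 y)^2) has_integral (\<Sum>j<M. G j)) {0..1}"
    using g unfolding G_def H2_per_def
    by (intro has_integral_space_mesh_sum[OF sm] integrable_integral) simp
  moreover have "((\<lambda>y. (deriv (deriv v) y)^2) has_integral (\<Sum>j<M. Q j)) {0..1}"
    unfolding Q_def v_def
    by (intro has_integral_space_mesh_sum[OF sm] integrable_integral
        hermite_spline_error_on_cell(1)[OF sm g])
  moreover have "(\<Sum>j<M. E j) \<le> mesh_h M x ^ 4 * (\<Sum>j<M. G j - Q j)"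
    unfolding sum_distrib_left E_def G_def Q_def v_def
    by (intro sum_mono hermite_spline_error_on_cell(2)[OF sm g]) simp
  ultimately show ?thesis
    by (simp add: integral_unique sum_subtractf)
qed

lemma power2_le_Young:
  fixes u v dt :: real
  assumes "0 < dt"
  shows "v^2 \<le> (1 + dt) * u^2 + (1 + 1 / dt) * (u - v)^2"
proof -
  have "dt * ((1 + dt) * u^2 + (1 + 1 / dt) * (u - v)^2 - v^2) = (dt * u + (u - v))^2"
    using assms by (simp add: power2_eq_square field_simps)
  then have "0 \<le> dt * ((1 + dt) * u^2 + (1 + 1 / dt) * (u - v)^2 - v^2)" by simp
  then show ?thesis using assms by (simp add: zero_le_mult_iff)
qed

lemma sqrt_stability_bound:
  fixes A E G Q V c dt :: real
  assumes dt: "0 < dt" and "0 \<le> c" "0 \<le> A" "0 \<le> G" "0 \<le> Q"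
    and V: "V \<le> (1 + dt) * A + (1 + 1 / dt) * E" and E: "E \<le> c * (G - Q)"
  shows "sqrt (V + c / dt * Q) \<le> (1 + dt) * sqrt (A + c / dt * G)"
proof (rule real_le_lsqrt)
  have X: "0 \<le> A + c / dt * G" using assms by simp
  then show "0 \<le> (1 + dt) * sqrt (A + c / dt * G)" using dt by simp
  have "V + c / dt * Q \<le> (1 + dt) * A + (1 + 1 / dt) * (c * (G - Q)) + c / dt * Q"
    using V E dt by (smt (verit) mult_left_mono divide_nonneg_pos)
  also have "\<dots> = (1 + dt) * (A + c / dt * G) - c * Q"
    using dt by (simp add: field_simps)
  also have "\<dots> \<le> (1 + dt) * (A + c / dt * G)"
    using assms by simp
  also have "\<dots> \<le> (1 + dt)^2 * (A + c / dt * G)"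
    using X dt by (intro mult_right_mono) (simp_all add: power2_eq_square)
  also have "\<dots> = ((1 + dt) * sqrt (A + c / dt * G))^2"
    using X by (simp add: power_mult_distrib)
  finally show "V + c / dt * Q \<le> ((1 + dt) * sqrt (A + c / dt * G))^2" .
qed

(* No integrability assumption is needed: the integral of a non-integrable function is 0. *)
lemma integral_square_nonneg: "0 \<le> integral S (\<lambda>y. (f y)^2 :: real)"
  by (cases "(\<lambda>y. (f y)^2) integrable_on S") (simp_all add: integral_nonneg not_integrable_integral)

lemma H2hdt_norm_nonneg:
  assumes "0 \<le> dt"
  shows "0 \<le> H2hdt_norm h dt f f2"
  using assms integral_square_nonneg[of "{0..1}" f] integral_square_nonneg[of "{0..1}" f2]
  by (simp add: H2hdt_norm_def)

lemma H2hdt_norm_interp_le: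
  assumes sm: "space_mesh M x" and g: "H2_per g g1 g2" and dt: "0 < dt" "dt \<le> s"
  shows "H2hdt_norm (mesh_h M x) dt (interp M x g) (deriv (deriv (interp M x g)))
    \<le> (1 + s) * H2hdt_norm (mesh_h M x) dt g g2"
proof -
  define v where "v = hermite_spline hermite M x g g1"
  have "(g has_real_derivative g1 y) (at y)" for y
    using g by (simp add: H2_per_def)
  then have "continuous_on {0..1} g"
    by (blast intro: DERIV_continuous_on has_field_derivative_at_within)
  moreover have "continuous_on {0..1} v"
    unfolding v_def using hermite_spline_has_real_derivative[OF sm]
    by (blast intro: DERIV_continuous_on has_field_derivative_at_within)
  ultimately have g_int: "(\<lambda>y. (g y)^2) integrable_on {0..1}"
    and v_int: "(\<lambda>y. (v y)^2) integrable_on {0..1}"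
    and gv_int: "(\<lambda>y. (g y - v y)^2) integrable_on {0..1}"
    by (simp_all add: integrable_continuous_interval continuous_on_power continuous_on_diff)
  have "integral {0..1} (\<lambda>y. (v y)^2)
      \<le> integral {0..1} (\<lambda>y. (1 + dt) * (g y)^2 + (1 + 1 / dt) * (g y - v y)^2)"
    using g_int v_int gv_int
    by (intro integral_le power2_le_Young[OF dt(1)] integrable_add integrable_on_mult_right) simp_all
  also have "\<dots> = (1 + dt) * integral {0..1} (\<lambda>y. (g y)^2)
      + (1 + 1 / dt) * integral {0..1} (\<lambda>y. (g y - v y)^2)"
    using g_int gv_int by (simp add: integral_add integrable_on_mult_right)
  finally have V: "integral {0..1} (\<lambda>y. (v y)^2) \<le> \<dots>" .
  have "H2hdt_norm (mesh_h M x) dt v (deriv (deriv v)) \<le> (1 + dt) * H2hdt_norm (mesh_h M x) dt g g2"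
    unfolding H2hdt_norm_def
    by (rule sqrt_stability_bound[OF dt(1) _ integral_square_nonneg integral_square_nonneg
          integral_square_nonneg V hermite_spline_error[OF sm g, folded v_def]]) simp
  also have "\<dots> \<le> (1 + s) * H2hdt_norm (mesh_h M x) dt g g2"
    using dt H2hdt_norm_nonneg[of dt] by (intro mult_right_mono) simp_all
  finally show ?thesis
    unfolding interp_eq_hermite_spline[OF sm g, folded v_def] .
qed

lemma dt_max_pos:
  assumes "time_mesh N t T"
  shows "0 < dt_max N t"
proof -
  have "0 < N" "0 < t (Suc 0) - t 0" using assms by (auto simp: time_mesh_def)
  moreover from \<open>0 < N\<close> have "t (Suc 0) - t 0 \<le> dt_max N t"
    unfolding dt_max_def by (intro Max_ge) auto
  ultimately show ?thesis by linarith
qed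

lemma dt_min_le:
  assumes "n < N"
  shows "dt_min N t \<le> t (Suc n) - t n"
  unfolding dt_min_def using assms by (intro Min_le) auto

theorem lemma5:
  fixes T :: real
  assumes "T > 0"
  shows "(\<exists>C>0. \<forall>N t M x g g1 g2.
            time_mesh N t T \<and> dt_max N t < 1 \<and> space_mesh M x \<and> H2_per g g1 g2 \<longrightarrow>
            H2hdt_norm (mesh_h M x) (dt_max N t) (interp M x g) (deriv (deriv (interp M x g)))
              \<le> (1 + C * dt_max N t) * H2hdt_norm (mesh_h M x) (dt_max N t) g g2)
       \<and> (\<forall>C2>0. \<exists>C>0. \<forall>N t M x g g1 g2.
            time_mesh N t T \<and> dt_max N t < 1 \<and> space_mesh M x \<and> H2_per g g1 g2
            \<and> dt_max N t \<le> C2 * dt_min N t \<longrightarrow>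
            (\<forall>n<N. H2hdt_norm (mesh_h M x) (dt_max N t) (interp M x g) (deriv (deriv (interp M x g)))
              \<le> (1 + C * (t (Suc n) - t n)) * H2hdt_norm (mesh_h M x) (dt_max N t) g g2))"
proof -
  have bound: "H2hdt_norm (mesh_h M x) (dt_max N t) (interp M x g) (deriv (deriv (interp M x g)))
      \<le> (1 + s) * H2hdt_norm (mesh_h M x) (dt_max N t) g g2"
    if "time_mesh N t T" "space_mesh M x" "H2_per g g1 g2" "dt_max N t \<le> s" for N t M x g g1 g2 s
    using that(2,3) dt_max_pos[OF that(1)] that(4) by (rule H2hdt_norm_interp_le)
  have step: "dt_max N t \<le> C2 * (t (Suc n) - t n)"
    if "0 < C2" "dt_max N t \<le> C2 * dt_min N t" "n < N" for C2 N t n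
    using that dt_min_le[OF that(3), of t] by (meson mult_left_mono less_imp_le order_trans)
  show ?thesis
    apply (intro conjI allI impI)
    subgoal by (intro exI[of _ 1] conjI allI impI) (auto intro: bound)
    subgoal for C2 by (intro exI[of _ C2] conjI allI impI) (auto intro: bound step)
    done
qed

end
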